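(* Let $G$ be a cyclically $4$-edge-connected cubic graph and let $e$ and $f$ be two edges of $G$. Then $G$ has no perfect matching that avoids $e$ and contains $f$ if and only if the graph $G-\{e,f\}$ (obtained by deleting the two edges) is bipartite, with both end-vertices of $e$ in one color class and both end-vertices of $f$ in the other color class.
   Context: Graphs may have parallel edges. An edge-cut $E(A,B)$ (edges between the parts of a partition $\{A,B\}$ of $V(G)$) is cyclic if both $G[A]$ and $G[B]$ contain a cycle; $G$ is cyclically $k$-edge-connected if it has no cyclic edge-cut with fewer than $k$ edges. *)

theory Defs
  imports Main
begin

text \<open>Finite loopless multigraphs (parallel edges allowed): vertex set V, edge set E,
  and an incidence map ends giving the two distinct end-vertices of each edge.\<close>

definition multigraph :: "'v set \<Rightarrow> 'e set \<Rightarrow> ('e \<Rightarrow> 'v set) \<Rightarrow> bool" where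
  "multigraph V E ends \<longleftrightarrow> finite V \<and> finite E \<and>
     (\<forall>e\<in>E. card (ends e) = 2 \<and> ends e \<subseteq> V)"

definition degree :: "'e set \<Rightarrow> ('e \<Rightarrow> 'v set) \<Rightarrow> 'v \<Rightarrow> nat" where
  "degree E ends v = card {e\<in>E. v \<in> ends e}"

definition cubic :: "'v set \<Rightarrow> 'e set \<Rightarrow> ('e \<Rightarrow> 'v set) \<Rightarrow> bool" where
  "cubic V E ends \<longleftrightarrow> multigraph V E ends \<and> (\<forall>v\<in>V. degree E ends v = 3)"

text \<open>The induced subgraph G[A] contains a cycle: distinct vertices v_0..v_(k-1) in A and
  distinct edges e_0..e_(k-1) of G with e_i joining v_i and v_(i+1 mod k), k >= 2
  (k = 2 is a pair of parallel edges).\<close>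
definition has_cycle_in :: "'e set \<Rightarrow> ('e \<Rightarrow> 'v set) \<Rightarrow> 'v set \<Rightarrow> bool" where
  "has_cycle_in E ends A \<longleftrightarrow>
     (\<exists>vs es. length vs = length es \<and> length vs \<ge> 2 \<and> distinct vs \<and> distinct es \<and>
        set vs \<subseteq> A \<and> set es \<subseteq> E \<and>
        (\<forall>i < length vs. ends (es ! i) = {vs ! i, vs ! ((i + 1) mod length vs)}))"

definition edge_cut :: "'v set \<Rightarrow> 'e set \<Rightarrow> ('e \<Rightarrow> 'v set) \<Rightarrow> 'v set \<Rightarrow> 'e set" where
  "edge_cut V E ends A = {e\<in>E. ends e \<inter> A \<noteq> {} \<and> ends e \<inter> (V - A) \<noteq> {}}"

definition cyclic_edge_cut :: "'v set \<Rightarrow> 'e set \<Rightarrow> ('e \<Rightarrow> 'v set) \<Rightarrow> 'v set \<Rightarrow> bool" where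
  "cyclic_edge_cut V E ends A \<longleftrightarrow> A \<subseteq> V \<and> has_cycle_in E ends A \<and> has_cycle_in E ends (V - A)"

definition cyclically_k_edge_connected :: "nat \<Rightarrow> 'v set \<Rightarrow> 'e set \<Rightarrow> ('e \<Rightarrow> 'v set) \<Rightarrow> bool" where
  "cyclically_k_edge_connected k V E ends \<longleftrightarrow>
     (\<forall>A. cyclic_edge_cut V E ends A \<longrightarrow> card (edge_cut V E ends A) \<ge> k)"

definition perfect_matching :: "'v set \<Rightarrow> 'e set \<Rightarrow> ('e \<Rightarrow> 'v set) \<Rightarrow> 'e set \<Rightarrow> bool" where
  "perfect_matching V E ends M \<longleftrightarrow> M \<subseteq> E \<and> (\<forall>v\<in>V. card {m\<in>M. v \<in> ends m} = 1)"

definition bipartition :: "'v set \<Rightarrow> 'e set \<Rightarrow> ('e \<Rightarrow> 'v set) \<Rightarrow> 'v set \<Rightarrow> bool" where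
  "bipartition V E ends X \<longleftrightarrow> X \<subseteq> V \<and>
     (\<forall>e\<in>E. card (ends e \<inter> X) = 1 \<and> card (ends e \<inter> (V - X)) = 1)"

end

theory Submission
  imports Defs "HOL-Library.Disjoint_Sets"
begin

text \<open>If G - e - f is bipartite with e inside one class X and f inside the other, degree counting gives
  |X| = |V - X|, whereas such a matching would force |V - X| = |X| + 2.

  Conversely, such a matching exists iff G - e - x - y has a perfect matching, so if there is none,
  Tutte's theorem provides a barrier S.  With T = S + {x, y} the rest V - T splits into blocks, no two
  joined by an edge other than e, of which at least |T| are odd.  Counting the edges leaving the
  blocks (at least 3 per block, at least 4 for larger blocks by cyclic 4-edge-connectivity) against
  3|T| = 2|E(T)| + |cut(T)| shows that every inequality is tight: the blocks are single vertices,
  f is the only edge inside T, and e lies outside T.  Then X = V - T is the required colour class.\<close>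

section \<open>Perfect pairings of an adjacency relation\<close>

text \<open>A perfect matching of a (simple) graph on vertex set W with adjacency relation adj is
  represented by its partner function: a fixed-point-free involution of W along adj.\<close>

definition perfect_pairing :: "'v set \<Rightarrow> ('v \<Rightarrow> 'v \<Rightarrow> bool) \<Rightarrow> ('v \<Rightarrow> 'v) \<Rightarrow> bool" where
  "perfect_pairing W adj m \<longleftrightarrow> (\<forall>v\<in>W. m v \<in> W \<and> m v \<noteq> v \<and> m (m v) = v \<and> adj v (m v))"

lemma perfect_pairingD:
  assumes "perfect_pairing W adj m" "v \<in> W"
  shows "m v \<in> W" "m v \<noteq> v" "m (m v) = v" "adj v (m v)"
  using assms unfolding perfect_pairing_def by auto

lemma perfect_pairing_restrict:
  assumes m: "perfect_pairing W adj m" and "A \<subseteq> W" and closed: "m ` A \<subseteq> A"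
  shows "perfect_pairing A adj m" "perfect_pairing (W - A) adj m"
proof -
  have "m v \<notin> A" if "v \<in> W - A" for v
    using that closed perfect_pairingD(3)[OF m, of v] by force
  then show "perfect_pairing A adj m" "perfect_pairing (W - A) adj m"
    using m \<open>A \<subseteq> W\<close> closed unfolding perfect_pairing_def by auto
qed

lemma perfect_pairing_join:
  assumes "perfect_pairing A adj m" "perfect_pairing B adj m'" "A \<inter> B = {}"
  shows "perfect_pairing (A \<union> B) adj (\<lambda>v. if v \<in> A then m v else m' v)"
proof -
  define n where "n = (\<lambda>v. if v \<in> A then m v else m' v)"
  have "n v \<in> A \<union> B \<and> n v \<noteq> v \<and> n (n v) = v \<and> adj v (n v)" if "v \<in> A \<union> B" for v
  proof (cases "v \<in> A")
    case True
    then show ?thesis using perfect_pairingD[OF assms(1) True] unfolding n_def by auto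
  next
    case False
    with that have "v \<in> B" by blast
    then have "m' v \<notin> A" using perfect_pairingD(1)[OF assms(2)] assms(3) by blast
    then show ?thesis using perfect_pairingD[OF assms(2) \<open>v \<in> B\<close>] False unfolding n_def by auto
  qed
  then have "perfect_pairing (A \<union> B) adj n" unfolding perfect_pairing_def by blast
  then show ?thesis by (simp only: n_def)
qed

lemma perfect_pairing_Union:
  assumes disj: "disjoint Q" and each: "\<forall>B\<in>Q. \<exists>m. perfect_pairing B adj m"
  shows "\<exists>m. perfect_pairing (\<Union>Q) adj m"
proof -
  from each obtain F where F: "\<And>B. B \<in> Q \<Longrightarrow> perfect_pairing B adj (F B)" by metis
  define block where "block v = (THE B. B \<in> Q \<and> v \<in> B)" for v
  have block: "block v = B" if "B \<in> Q" "v \<in> B" for B v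
    unfolding block_def
    by (rule the_equality) (use that disj in \<open>auto simp: pairwise_def disjnt_def\<close>)
  have "perfect_pairing (\<Union>Q) adj (\<lambda>v. F (block v) v)"
    unfolding perfect_pairing_def
  proof
    fix v assume "v \<in> \<Union>Q"
    then obtain B where B: "B \<in> Q" "v \<in> B" by auto
    then show "F (block v) v \<in> \<Union>Q \<and> F (block v) v \<noteq> v \<and> F (block (F (block v) v)) (F (block v) v) = v
        \<and> adj v (F (block v) v)"
      using perfect_pairingD[OF F[OF B(1)] B(2)] block[OF B] block[OF B(1)] B by auto
  qed
  then show ?thesis by blast
qed

lemma perfect_pairing_insert_edge:
  assumes "perfect_pairing B adj m" "x \<notin> B" "y \<notin> B" "x \<noteq> y" "adj x y" "adj y x"
  shows "perfect_pairing (insert x (insert y B)) adj (m(x := y, y := x))"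
  using assms unfolding perfect_pairing_def by auto

lemma perfect_pairing_avoiding:
  assumes "perfect_pairing W adj' m" "\<And>u v. adj' u v \<Longrightarrow> u \<notin> X \<Longrightarrow> adj u v" "W \<inter> X = {}"
  shows "perfect_pairing W adj m"
  using assms unfolding perfect_pairing_def by blast

lemma clique_perfect_pairing:
  assumes "finite B" "even (card B)" "\<And>x y. x \<in> B \<Longrightarrow> y \<in> B \<Longrightarrow> x \<noteq> y \<Longrightarrow> adj x y"
  shows "\<exists>m. perfect_pairing B adj m"
  using assms
proof (induction "card B" arbitrary: B rule: less_induct)
  case less
  show ?case
  proof (cases "B = {}")
    case True
    then show ?thesis by (auto simp: perfect_pairing_def)
  next
    case False
    then obtain x where x: "x \<in> B" by auto
    have "B - {x} \<noteq> {}"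
    proof
      assume "B - {x} = {}"
      then have "B = {x}" using x by auto
      then show False using less.prems(2) by simp
    qed
    then obtain y where y: "y \<in> B" "y \<noteq> x" by auto
    let ?B = "B - {x, y}"
    have "card {x, y} \<le> card B" by (rule card_mono) (use x y less.prems(1) in auto)
    moreover have "card ?B = card B - 2" using x y less.prems(1) by (simp add: card_Diff_subset)
    ultimately have "card ?B = card B - 2" "card B \<ge> 2" using y by auto
    then have "card ?B < card B" "even (card ?B)" using less.prems(2) by auto
    then obtain m where "perfect_pairing ?B adj m"
      using less.hyps[of ?B] less.prems by auto
    then have "perfect_pairing (insert x (insert y ?B)) adj (m(x := y, y := x))"
      by (rule perfect_pairing_insert_edge) (use x y less.prems(3) in auto)
    moreover have "insert x (insert y ?B) = B" using x y by auto
    ultimately show ?thesis by auto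
  qed
qed

fun alt_walk :: "('v \<Rightarrow> 'v) \<Rightarrow> ('v \<Rightarrow> 'v) \<Rightarrow> 'v \<Rightarrow> nat \<Rightarrow> 'v" where
  "alt_walk m1 m2 d 0 = d"
| "alt_walk m1 m2 d (Suc n) = (if even n then m1 else m2) (alt_walk m1 m2 d n)"

context
  fixes W :: "'v set" and adj1 adj2 :: "'v \<Rightarrow> 'v \<Rightarrow> bool" and m1 m2 :: "'v \<Rightarrow> 'v" and d :: 'v
  assumes p1: "perfect_pairing W adj1 m1" and p2: "perfect_pairing W adj2 m2" and d: "d \<in> W"
begin

lemma alt_walk_in: "alt_walk m1 m2 d n \<in> W"
  using perfect_pairingD(1)[OF p1] perfect_pairingD(1)[OF p2] d by (induction n) auto

lemma alt_walk_back: "(if even n then m1 else m2) (alt_walk m1 m2 d (Suc n)) = alt_walk m1 m2 d n"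
  using perfect_pairingD(3)[OF p1 alt_walk_in] perfect_pairingD(3)[OF p2 alt_walk_in] by simp

lemma alt_walk_m1: "m1 (alt_walk m1 m2 d i) \<in> alt_walk m1 m2 d ` {..Suc i}"
proof (cases "even i")
  case True
  then show ?thesis by (intro image_eqI[of _ _ "Suc i"]) auto
next
  case False
  then obtain j where "i = Suc j" by (cases i) auto
  with False have "i = Suc j" "even j" by auto
  then show ?thesis using alt_walk_back[of j] by (intro image_eqI[of _ _ j]) auto
qed

lemma alt_walk_m2: "m2 (alt_walk m1 m2 d i) \<in> insert (m2 d) (alt_walk m1 m2 d ` {..Suc i})"
proof (cases "odd i")
  case True
  then show ?thesis by (intro insertI2 image_eqI[of _ _ "Suc i"]) auto
next
  case False
  show ?thesis
  proof (cases i)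
    case (Suc j)
    with False have "odd j" by simp
    then show ?thesis using alt_walk_back[of j] Suc by (intro insertI2 image_eqI[of _ _ j]) auto
  qed simp
qed

text \<open>Until it reaches m2 d, the walk visits no vertex twice: a first repetition would force two
  distinct vertices to share a partner.\<close>
lemma alt_walk_distinct:
  assumes avoid: "\<forall>i<k. alt_walk m1 m2 d i \<noteq> m2 d" and "i < j" "j \<le> k"
  shows "alt_walk m1 m2 d i \<noteq> alt_walk m1 m2 d j"
  using assms(2,3)
proof (induction j arbitrary: i rule: less_induct)
  case (less j)
  let ?w = "alt_walk m1 m2 d" and ?step = "\<lambda>n. if even n then m1 else m2"
  have step_fix: "?step n v \<noteq> v" if "v \<in> W" for n :: nat and v
    using perfect_pairingD(2)[OF p1 that] perfect_pairingD(2)[OF p2 that] by simp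
  obtain j' where j: "j = Suc j'" using less.prems by (cases j) auto
  show ?case
  proof
    assume eq: "?w i = ?w j"
    then have prev: "?w j' = ?step j' (?w i)" using alt_walk_back[of j'] j by simp
    show False
    proof (cases i)
      case 0
      show False
      proof (cases "even j'")
        case True
        then have "?w j' = ?w 1" using prev 0 by simp
        moreover have "j' \<noteq> 0" using prev 0 True step_fix[OF d, of 0] by (cases j') auto
        ultimately show False using less.IH[of j' 1] True j less.prems by fastforce
      next
        case False
        then show False using prev 0 avoid j less.prems by auto
      qed
    next
      case (Suc i')
      show False
      proof (cases "even i' = even j'")
        case True
        then have "?w i' = ?w j'" using alt_walk_back[of i'] prev Suc by simp
        then show False using less.IH[of j' i'] Suc j less.prems by simp
      next
        case False
        then have "?w (Suc i) = ?w j'" using prev Suc by simp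
        moreover have "i \<noteq> j'" using eq j step_fix[OF alt_walk_in, of i i] by auto
        moreover have "Suc i \<noteq> j'" using False Suc by auto
        ultimately show False using less.IH[of j' "Suc i"] j less.prems by simp
      qed
    qed
  qed
qed

lemma alt_walk_reaches:
  assumes "finite W"
  shows "\<exists>k. alt_walk m1 m2 d k = m2 d"
proof (rule ccontr)
  assume "\<not> ?thesis"
  then have "alt_walk m1 m2 d i \<noteq> alt_walk m1 m2 d j" if "i < j" "j \<le> card W" for i j
    using alt_walk_distinct[of "card W" i j] that by blast
  then have "inj_on (alt_walk m1 m2 d) {..card W}"
    by (metis atMost_iff inj_onI linorder_neqE_nat)
  then have "card (alt_walk m1 m2 d ` {..card W}) = Suc (card W)" by (simp add: card_image)
  moreover have "card (alt_walk m1 m2 d ` {..card W}) \<le> card W"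
    using alt_walk_in by (intro card_mono[OF assms]) auto
  ultimately show False by simp
qed

lemma alt_walk_closed_cycle:
  assumes "0 < k" and returns: "alt_walk m1 m2 d k = m2 d" and first: "\<forall>i<k. alt_walk m1 m2 d i \<noteq> m2 d"
  shows "m1 ` alt_walk m1 m2 d ` {..k} \<subseteq> alt_walk m1 m2 d ` {..k}"
    "m2 ` alt_walk m1 m2 d ` {..k} \<subseteq> alt_walk m1 m2 d ` {..k}"
proof -
  let ?w = "alt_walk m1 m2 d"
  obtain n where k: "k = Suc n" using assms(1) by (cases k) auto
  have "even n"
  proof (rule ccontr)
    assume "odd n"
    then have "?w n = ?w 0" using alt_walk_back[of n] returns k perfect_pairingD(3)[OF p2 d] by simp
    moreover have "0 < n" using \<open>odd n\<close> by (cases n) auto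
    ultimately show False using alt_walk_distinct[OF first, of 0 n] k by auto
  qed
  then have m1k: "m1 (?w k) = ?w n" using alt_walk_back[of n] k by simp
  have m2k: "m2 (?w k) = ?w 0" using returns perfect_pairingD(3)[OF p2 d] by simp
  have closed: "m1 (?w i) \<in> ?w ` {..k} \<and> m2 (?w i) \<in> ?w ` {..k}" if "i \<le> k" for i
  proof (cases "i = k")
    case True
    have "?w n \<in> ?w ` {..k}" "?w 0 \<in> ?w ` {..k}" using k by (auto intro: image_eqI[of _ _ 0])
    then show ?thesis using m1k m2k True by simp
  next
    case False
    then have "{..Suc i} \<subseteq> {..k}" using that by auto
    then show ?thesis using alt_walk_m1[of i] alt_walk_m2[of i] returns by (auto intro: image_eqI[of _ _ k])
  qed
  show "m1 ` ?w ` {..k} \<subseteq> ?w ` {..k}" "m2 ` ?w ` {..k} \<subseteq> ?w ` {..k}"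
    unfolding image_image using closed by (auto intro!: image_subsetI)
qed

lemma alt_walk_open_path:
  assumes k: "k = Suc n" and fresh: "\<forall>i<k. alt_walk m1 m2 d i \<noteq> m1 (alt_walk m1 m2 d k)"
  shows "m1 ` alt_walk m1 m2 d ` {..<k} \<subseteq> alt_walk m1 m2 d ` {..<k}"
    "m2 ` alt_walk m1 m2 d ` {..<k} \<subseteq> insert (alt_walk m1 m2 d k) (insert (m2 d) (alt_walk m1 m2 d ` {..<k}))"
    "m2 (alt_walk m1 m2 d k) \<in> alt_walk m1 m2 d ` {..<k}"
proof -
  let ?w = "alt_walk m1 m2 d"
  have m1_back: "?w i = m1 (?w k)" if "m1 (?w i) = ?w k" for i
    using that perfect_pairingD(3)[OF p1 alt_walk_in, of i] by simp
  show "m1 ` ?w ` {..<k} \<subseteq> ?w ` {..<k}"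
    unfolding image_image
  proof (rule image_subsetI)
    fix i assume "i \<in> {..<k}"
    then have "i < k" by simp
    obtain j where j: "j \<le> Suc i" "m1 (?w i) = ?w j" using alt_walk_m1[of i] by auto
    then have "j \<noteq> k" using fresh m1_back \<open>i < k\<close> by blast
    with j \<open>i < k\<close> show "m1 (?w i) \<in> ?w ` {..<k}" by auto
  qed
  show "m2 ` ?w ` {..<k} \<subseteq> insert (?w k) (insert (m2 d) (?w ` {..<k}))"
    unfolding image_image
  proof (rule image_subsetI)
    fix i assume "i \<in> {..<k}"
    then have "{..Suc i} \<subseteq> insert k {..<k}" by auto
    then show "m2 (?w i) \<in> insert (?w k) (insert (m2 d) (?w ` {..<k}))"
      using alt_walk_m2[of i] by blast
  qed
  have "odd n"
  proof (rule ccontr)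
    assume "\<not> odd n"
    then have "m1 (?w n) = ?w k" using k by simp
    then show False using fresh m1_back k by blast
  qed
  then show "m2 (?w k) \<in> ?w ` {..<k}" using alt_walk_back[of n] k by auto
qed

end

section \<open>The switching step of Lovasz's proof of Tutte's theorem\<close>

text \<open>Walking from d alternately along m1 and m2, one
  either returns to b, closing an alternating cycle through bd that avoids ac, or reaches a or c along
  an m2-step and closes an alternating cycle with an edge to b.\<close>
lemma alternating_switch:
  assumes sym: "\<And>u v. adj u v \<Longrightarrow> adj v u" and fin: "finite W"
    and p1: "perfect_pairing W adj1 m1" and p2: "perfect_pairing W adj2 m2"
    and adj1: "\<And>u v. adj1 u v \<Longrightarrow> u \<notin> {a, c} \<Longrightarrow> adj u v"
    and adj2: "\<And>u v. adj2 u v \<Longrightarrow> u \<notin> {b, d} \<Longrightarrow> adj u v"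
    and m1a: "m1 a = c" and m2b: "m2 b = d" and W: "a \<in> W" "b \<in> W"
    and ba: "adj b a" and bc: "adj b c" and b_ac: "b \<notin> {a, c}" and d_ac: "d \<notin> {a, c}"
  shows "\<exists>m. perfect_pairing W adj m"
proof -
  let ?w = "alt_walk m1 m2 d"
  have dW: "d \<in> W" using perfect_pairingD(1)[OF p2 W(2)] m2b by simp
  have m2d: "m2 d = b" using perfect_pairingD(3)[OF p2 W(2)] m2b by simp
  have m1c: "m1 c = a" using perfect_pairingD(3)[OF p1 W(1)] m1a by simp
  have db: "d \<noteq> b" using perfect_pairingD(2)[OF p2 W(2)] m2b by simp
  note walk_W = alt_walk_in[OF p1 p2 dW]
  have "\<exists>k. ?w k \<in> {a, b, c}" using alt_walk_reaches[OF p1 p2 dW fin] m2d by auto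
  define k where "k = (LEAST k. ?w k \<in> {a, b, c})"
  have hit: "?w k \<in> {a, b, c}" unfolding k_def by (rule LeastI_ex) fact
  have before: "?w i \<notin> {a, b, c}" if "i < k" for i using that not_less_Least unfolding k_def by blast
  have "k \<noteq> 0" using hit d_ac db by (cases k) auto
  then obtain n where k: "k = Suc n" by (cases k) auto
  consider (returns) "?w k = b" | (crosses) "?w k \<in> {a, c}" using hit by auto
  then show ?thesis
  proof cases
    case returns
    define C where "C = ?w ` {..k}"
    have "\<forall>i<k. ?w i \<noteq> m2 d" using before m2d by auto
    then have m1C: "m1 ` C \<subseteq> C" and m2C: "m2 ` C \<subseteq> C"
      using alt_walk_closed_cycle[OF p1 p2 dW, of k] returns m2d k unfolding C_def by auto
    have CW: "C \<subseteq> W" using walk_W unfolding C_def by auto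
    have bdC: "b \<in> C" "d \<in> C" using returns unfolding C_def by (auto intro: image_eqI[of _ _ 0])
    have C_ac: "C \<inter> {a, c} = {}" using before b_ac returns unfolding C_def by (fastforce simp: le_less)
    have "perfect_pairing C adj m1"
      using perfect_pairing_restrict(1)[OF p1 CW m1C] adj1 C_ac by (rule perfect_pairing_avoiding)
    moreover have "perfect_pairing (W - C) adj m2"
      using perfect_pairing_restrict(2)[OF p2 CW m2C] adj2
      by (rule perfect_pairing_avoiding[where X = "{b, d}"]) (use bdC in auto)
    ultimately have "perfect_pairing (C \<union> (W - C)) adj (\<lambda>v. if v \<in> C then m1 v else m2 v)"
      by (rule perfect_pairing_join) auto
    moreover have "C \<union> (W - C) = W" using CW by blast
    ultimately show ?thesis by auto
  next
    case crosses
    define u where "u = ?w k"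
    define P where "P = ?w ` {..<k}"
    have u_ac: "u \<in> {a, c}" using crosses u_def by simp
    then have "\<forall>i<k. ?w i \<noteq> m1 (?w k)" using before m1a m1c u_def by auto
    note path = alt_walk_open_path[OF p1 p2 dW k this, folded P_def u_def]
    have PW: "P \<subseteq> W" using walk_W unfolding P_def by auto
    have P_abc: "P \<inter> {a, b, c} = {}" using before unfolding P_def by auto
    have dP: "d \<in> P" using k unfolding P_def by (auto intro: image_eqI[of _ _ 0])
    have pP: "perfect_pairing P adj m1"
      using perfect_pairing_restrict(1)[OF p1 PW path(1)] adj1
      by (rule perfect_pairing_avoiding[where X = "{a, c}"]) (use P_abc in auto)
    define Q where "Q = insert u (insert b P)"
    have QW: "Q \<subseteq> W" using PW W walk_W unfolding Q_def u_def by auto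
    have "adj u b" "adj b u" using u_ac ba bc sym by auto
    then have pQ: "perfect_pairing Q adj (m1(u := b, b := u))"
      unfolding Q_def by (rule perfect_pairing_insert_edge[OF pP, rotated 3]) (use P_abc u_ac b_ac in auto)
    have m2Q: "m2 ` Q \<subseteq> Q" using path(2,3) m2b m2d dP unfolding Q_def by auto
    have "perfect_pairing (W - Q) adj m2"
      using perfect_pairing_restrict(2)[OF p2 QW m2Q] adj2
      by (rule perfect_pairing_avoiding[where X = "{b, d}"]) (use dP in \<open>auto simp: Q_def\<close>)
    with pQ have "perfect_pairing (Q \<union> (W - Q)) adj (\<lambda>v. if v \<in> Q then (m1(u := b, b := u)) v else m2 v)"
      by (rule perfect_pairing_join) auto
    moreover have "Q \<union> (W - Q) = W" using QW by blast
    ultimately show ?thesis by auto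
  qed
qed

section \<open>Tutte's theorem\<close>

text \<open>The components
  of G - S form the finest separated partition of W - S, and every separated partition has at most
  as many odd blocks as there are odd components, so the following is Tutte's condition.\<close>

definition separated :: "('v \<Rightarrow> 'v \<Rightarrow> bool) \<Rightarrow> 'v set set \<Rightarrow> bool" where
  "separated adj P \<longleftrightarrow> (\<forall>B\<in>P. \<forall>B'\<in>P. B \<noteq> B' \<longrightarrow> (\<forall>x\<in>B. \<forall>y\<in>B'. \<not> adj x y))"

definition tutte_condition :: "'v set \<Rightarrow> ('v \<Rightarrow> 'v \<Rightarrow> bool) \<Rightarrow> bool" where
  "tutte_condition W adj \<longleftrightarrow> (\<forall>S P. S \<subseteq> W \<longrightarrow> partition_on (W - S) P \<longrightarrow> separated adj P \<longrightarrow>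
     card {B\<in>P. odd (card B)} \<le> card S)"

lemma partition_parity:
  assumes "finite A" "partition_on A P"
  shows "even (card A) \<longleftrightarrow> even (card {B\<in>P. odd (card B)})"
proof -
  have "finite B" if "B \<in> P" for B
  proof (rule finite_subset[OF _ assms(1)])
    show "B \<subseteq> A" using that partition_onD1[OF assms(2)] by blast
  qed
  then have "card A = sum card P"
    using card_Union_disjoint[OF partition_onD2[OF assms(2)]] partition_onD1[OF assms(2)] by simp
  then show ?thesis using even_sum_iff[OF finite_elements[OF assms]] by simp
qed

lemma tutte_condition_even:
  assumes "finite W" "tutte_condition W adj"
  shows "even (card W)"
proof (cases "W = {}")
  case False
  then have "partition_on (W - {}) {W}" "separated adj {W}"
    by (auto simp: partition_on_space separated_def)
  then have "card {B\<in>{W}. odd (card B)} \<le> card ({} :: 'a set)"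
    using assms(2) unfolding tutte_condition_def by blast
  then show ?thesis by (cases "odd (card W)") auto
qed simp

text \<open>Adding edges preserves Tutte's condition, since it makes fewer partitions separated.\<close>
lemma tutte_condition_mono:
  assumes "tutte_condition W adj" "\<And>u v. adj u v \<Longrightarrow> adj' u v"
  shows "tutte_condition W adj'"
  unfolding tutte_condition_def
proof (intro allI impI)
  fix S P assume S: "S \<subseteq> W" and P: "partition_on (W - S) P" and sep': "separated adj' P"
  have "separated adj P"
    unfolding separated_def
  proof (intro ballI impI notI)
    fix B B' x y assume "B \<in> P" "B' \<in> P" "B \<noteq> B'" "x \<in> B" "y \<in> B'" "adj x y"
    then show False using sep' assms(2)[of x y] unfolding separated_def by blast
  qed
  with S P show "card {B \<in> P. odd (card B)} \<le> card S"
    using assms(1) unfolding tutte_condition_def by blast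
qed

definition with_edge :: "('v \<Rightarrow> 'v \<Rightarrow> bool) \<Rightarrow> 'v \<Rightarrow> 'v \<Rightarrow> 'v \<Rightarrow> 'v \<Rightarrow> bool" where
  "with_edge adj a c u v \<longleftrightarrow> adj u v \<or> (u = a \<and> v = c) \<or> (u = c \<and> v = a)"

lemma pairing_uses_edge:
  assumes "perfect_pairing W (with_edge adj a c) m" "\<not> perfect_pairing W adj m"
  shows "m a = c"
proof -
  obtain v where v: "v \<in> W" "\<not> adj v (m v)"
    using assms unfolding perfect_pairing_def by blast
  then have "(v = a \<and> m v = c) \<or> (v = c \<and> m v = a)"
    using perfect_pairingD(4)[OF assms(1) v(1)] unfolding with_edge_def by blast
  then show ?thesis using perfect_pairingD(3)[OF assms(1) v(1)] by auto
qed

text \<open>The number of (ordered) non-adjacent pairs of distinct vertices: the induction measure.\<close>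
definition nonedges :: "'v set \<Rightarrow> ('v \<Rightarrow> 'v \<Rightarrow> bool) \<Rightarrow> nat" where
  "nonedges W adj = card {(u, v). u \<in> W \<and> v \<in> W \<and> u \<noteq> v \<and> \<not> adj u v}"

lemma nonedges_with_edge:
  assumes "finite W" "a \<in> W" "c \<in> W" "a \<noteq> c" "\<not> adj a c"
  shows "nonedges W (with_edge adj a c) < nonedges W adj"
  unfolding nonedges_def
proof (rule psubset_card_mono)
  show "finite {(u, v). u \<in> W \<and> v \<in> W \<and> u \<noteq> v \<and> \<not> adj u v}"
    by (rule finite_subset[of _ "W \<times> W"]) (use assms(1) in auto)
  show "{(u, v). u \<in> W \<and> v \<in> W \<and> u \<noteq> v \<and> \<not> with_edge adj a c u v}
      \<subset> {(u, v). u \<in> W \<and> v \<in> W \<and> u \<noteq> v \<and> \<not> adj u v}"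
    using assms(2-5) unfolding with_edge_def by blast
qed

lemma transitive_clique_partition:
  assumes sym: "\<And>u v. adj u v \<Longrightarrow> adj v u"
    and trans: "\<And>x y z. x \<in> A \<Longrightarrow> y \<in> A \<Longrightarrow> z \<in> A \<Longrightarrow> adj x y \<Longrightarrow> adj y z \<Longrightarrow> x \<noteq> z \<Longrightarrow> adj x z"
  obtains P where "partition_on A P" "separated adj P"
    "\<And>B x y. B \<in> P \<Longrightarrow> x \<in> B \<Longrightarrow> y \<in> B \<Longrightarrow> x \<noteq> y \<Longrightarrow> adj x y"
proof -
  define R where "R = {(x, y). x \<in> A \<and> y \<in> A \<and> (x = y \<or> adj x y)}"
  have "trans R"
  proof (rule transI)
    fix x y z assume "(x, y) \<in> R" "(y, z) \<in> R"
    then have "x \<in> A" "y \<in> A" "z \<in> A" "x = y \<or> adj x y" "y = z \<or> adj y z"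
      unfolding R_def by auto
    then show "(x, z) \<in> R" using trans[of x y z] unfolding R_def by auto
  qed
  moreover have "sym R" using sym unfolding R_def sym_def by auto
  moreover have "refl_on A R" "R \<subseteq> A \<times> A" unfolding R_def refl_on_def by auto
  ultimately have R: "equiv A R" by (intro equivI)
  have same_class: "(x, y) \<in> R" if "B \<in> A // R" "x \<in> B" "y \<in> B" for B x y
    using quotient_eq_iff[OF R that(1) that(1) that(2,3)] by simp
  show ?thesis
  proof
    show "partition_on A (A // R)" by (rule partition_on_quotient[OF R])
    show "separated adj (A // R)"
      unfolding separated_def
    proof (intro ballI impI notI)
      fix B B' x y assume B: "B \<in> A // R" "B' \<in> A // R" "B \<noteq> B'" and xy: "x \<in> B" "y \<in> B'" "adj x y"
      have "x \<in> A" "y \<in> A" using in_quotient_imp_subset[OF R] B xy by auto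
      then have "(x, y) \<in> R" using xy(3) unfolding R_def by simp
      then show False using quotient_eq_iff[OF R B(1,2) xy(1,2)] B(3) by simp
    qed
    show "adj x y" if "B \<in> A // R" "x \<in> B" "y \<in> B" "x \<noteq> y" for B x y
      using same_class[OF that(1-3)] that(4) unfolding R_def by simp
  qed
qed

lemma completed_cliques_pairing:
  assumes fin: "finite W" and sym: "\<And>u v. adj u v \<Longrightarrow> adj v u"
    and univ: "\<And>u w. u \<in> U \<Longrightarrow> w \<in> W \<Longrightarrow> u \<noteq> w \<Longrightarrow> adj u w"
    and P: "partition_on (W - U) P"
    and cliques: "\<And>B x y. B \<in> P \<Longrightarrow> x \<in> B \<Longrightarrow> y \<in> B \<Longrightarrow> x \<noteq> y \<Longrightarrow> adj x y"
    and \<phi>: "\<phi> ` {B\<in>P. odd (card B)} \<subseteq> U" "inj_on \<phi> {B\<in>P. odd (card B)}"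
  shows "\<exists>m. perfect_pairing ((W - U) \<union> \<phi> ` {B\<in>P. odd (card B)}) adj m"
proof -
  define Od where "Od = {B\<in>P. odd (card B)}"
  define aug where "aug B = (if B \<in> Od then insert (\<phi> B) B else B)" for B
  have PU: "B \<subseteq> W - U" if "B \<in> P" for B using P that unfolding partition_on_def by blast
  have finB: "finite B" if "B \<in> P" for B using PU[OF that] fin finite_subset by blast
  have "\<exists>m. perfect_pairing (aug B) adj m" if B: "B \<in> P" for B
  proof (rule clique_perfect_pairing)
    show "finite (aug B)" using finB[OF B] unfolding aug_def by simp
    have "\<phi> B \<notin> B" if "B \<in> Od" using \<phi>(1) that PU[OF B] unfolding Od_def by auto
    then show "even (card (aug B))" using finB[OF B] B unfolding aug_def Od_def by auto
    have univ_B: "adj (\<phi> B) x" "adj x (\<phi> B)" if "B \<in> Od" "x \<in> B" "x \<noteq> \<phi> B" for x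
      using univ[of "\<phi> B" x] sym \<phi>(1) PU[OF B] that unfolding Od_def by auto
    show "adj x y" if "x \<in> aug B" "y \<in> aug B" "x \<noteq> y" for x y
      using that cliques[OF B] univ_B unfolding aug_def by (cases "B \<in> Od") auto
  qed
  moreover have "disjoint (aug ` P)"
  proof (rule pairwise_imageI)
    fix B B' assume B: "B \<in> P" "B' \<in> P" "aug B \<noteq> aug B'"
    then have "B \<noteq> B'" by auto
    then have "B \<inter> B' = {}" using partition_onD2[OF P] B(1,2) by (auto simp: pairwise_def disjnt_def)
    moreover have "\<phi> B \<noteq> \<phi> B'" if "B \<in> Od" "B' \<in> Od"
      using \<phi>(2) that \<open>B \<noteq> B'\<close> unfolding Od_def by (auto dest: inj_onD)
    ultimately show "disjnt (aug B) (aug B')"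
      using PU[OF B(1)] PU[OF B(2)] \<phi>(1) unfolding aug_def disjnt_def Od_def by auto
  qed
  ultimately obtain m where "perfect_pairing (\<Union>(aug ` P)) adj m"
    using perfect_pairing_Union by blast
  moreover have "\<Union>(aug ` P) = (W - U) \<union> \<phi> ` Od"
  proof
    show "\<Union>(aug ` P) \<subseteq> (W - U) \<union> \<phi> ` Od" using PU unfolding aug_def by auto
    show "(W - U) \<union> \<phi> ` Od \<subseteq> \<Union>(aug ` P)"
    proof
      fix x assume "x \<in> (W - U) \<union> \<phi> ` Od"
      then consider "x \<in> W - U" | B where "B \<in> Od" "x = \<phi> B" by blast
      then show "x \<in> \<Union>(aug ` P)"
      proof cases
        case 1
        then obtain B where "B \<in> P" "x \<in> B" using partition_onD1[OF P] by blast
        then show ?thesis unfolding aug_def by (intro UN_I[of B]) auto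
      next
        case 2
        then show ?thesis unfolding aug_def Od_def by (intro UN_I[of B]) auto
      qed
    qed
  qed
  ultimately have "perfect_pairing ((W - U) \<union> \<phi> ` Od) adj m" by simp
  then show ?thesis unfolding Od_def by blast
qed

text \<open>The base case of Lovasz's proof: if the vertices U adjacent to all others are removed and
  the rest falls apart into cliques, then Tutte's condition for S = U gives a perfect pairing: each odd
  clique is completed by its own vertex of U and the remaining vertices of U form an even clique.\<close>
lemma pairing_from_cliques:
  assumes fin: "finite W" and UW: "U \<subseteq> W" and sym: "\<And>u v. adj u v \<Longrightarrow> adj v u"
    and univ: "\<And>u w. u \<in> U \<Longrightarrow> w \<in> W \<Longrightarrow> u \<noteq> w \<Longrightarrow> adj u w"
    and P: "partition_on (W - U) P"
    and cliques: "\<And>B x y. B \<in> P \<Longrightarrow> x \<in> B \<Longrightarrow> y \<in> B \<Longrightarrow> x \<noteq> y \<Longrightarrow> adj x y"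
    and odd_le: "card {B\<in>P. odd (card B)} \<le> card U" and even_W: "even (card W)"
  shows "\<exists>m. perfect_pairing W adj m"
proof -
  define Od where "Od = {B\<in>P. odd (card B)}"
  have finU: "finite U" using UW fin finite_subset by blast
  have finP: "finite P" using finite_elements[OF _ P] fin by simp
  obtain \<phi> where \<phi>: "\<phi> ` Od \<subseteq> U" "inj_on \<phi> Od"
    using card_le_inj[of Od U] finP finU odd_le unfolding Od_def by auto
  have "\<exists>m. perfect_pairing ((W - U) \<union> \<phi> ` Od) adj m"
    using completed_cliques_pairing[of W adj U P \<phi>, OF fin sym univ P cliques \<phi>[unfolded Od_def]]
    unfolding Od_def .
  then obtain m where m: "perfect_pairing ((W - U) \<union> \<phi> ` Od) adj m" by blast
  define R where "R = U - \<phi> ` Od"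
  have "\<exists>m'. perfect_pairing R adj m'"
  proof (rule clique_perfect_pairing)
    show "finite R" using finU unfolding R_def by simp
    have "card (\<phi> ` Od) = card Od" using \<phi>(2) by (simp add: card_image)
    then have "card R = card U - card Od"
      using \<phi>(1) finU unfolding R_def by (simp add: card_Diff_subset finite_subset)
    moreover have "card W = card U + card (W - U)"
      using card_Diff_subset[OF finU UW] card_mono[OF fin UW] by simp
    moreover have "even (card (W - U)) \<longleftrightarrow> even (card Od)"
      using partition_parity[OF _ P] fin unfolding Od_def by simp
    moreover have "card Od \<le> card U" using odd_le unfolding Od_def .
    ultimately show "even (card R)" using even_W by presburger
    show "adj x y" if "x \<in> R" "y \<in> R" "x \<noteq> y" for x y using that univ UW unfolding R_def by auto
  qed
  then obtain m' where m': "perfect_pairing R adj m'" by blast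
  have "((W - U) \<union> \<phi> ` Od) \<inter> R = {}" unfolding R_def by blast
  with m m' have "perfect_pairing (((W - U) \<union> \<phi> ` Od) \<union> R) adj
      (\<lambda>v. if v \<in> (W - U) \<union> \<phi> ` Od then m v else m' v)"
    by (rule perfect_pairing_join)
  moreover have "((W - U) \<union> \<phi> ` Od) \<union> R = W" using UW \<phi>(1) unfolding R_def by blast
  ultimately show ?thesis by auto
qed

lemma tutte_transitive_case:
  assumes fin: "finite W" and sym: "\<And>u v. adj u v \<Longrightarrow> adj v u" and tc: "tutte_condition W adj"
    and UW: "U \<subseteq> W" and univ: "\<And>u w. u \<in> U \<Longrightarrow> w \<in> W \<Longrightarrow> u \<noteq> w \<Longrightarrow> adj u w"
    and trans: "\<And>x y z. x \<in> W - U \<Longrightarrow> y \<in> W - U \<Longrightarrow> z \<in> W - U \<Longrightarrow> adj x y \<Longrightarrow> adj y z \<Longrightarrow> x \<noteq> z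
      \<Longrightarrow> adj x z"
  shows "\<exists>m. perfect_pairing W adj m"
proof -
  obtain P where P: "partition_on (W - U) P" "separated adj P"
    and cliques: "\<And>B x y. B \<in> P \<Longrightarrow> x \<in> B \<Longrightarrow> y \<in> B \<Longrightarrow> x \<noteq> y \<Longrightarrow> adj x y"
    using transitive_clique_partition[of adj "W - U"] sym trans by blast
  have "card {B\<in>P. odd (card B)} \<le> card U" using tc UW P unfolding tutte_condition_def by blast
  then show ?thesis
    using pairing_from_cliques[of W U adj P, OF fin UW sym] univ P(1) cliques tutte_condition_even[OF fin tc]
    by blast
qed

text \<open>Tutte's theorem, by Lovasz's argument: induction on the number of non-edges.  Let U be the
  set of vertices adjacent to all others.  If adjacency is transitive off U, the base case applies.
  Otherwise there are a, b, c outside U with ab, bc edges but ac not, and some d not adjacent to b;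
  the graphs with ac resp. bd added still satisfy Tutte's condition and have fewer non-edges, so they
  have perfect pairings, and the switching step combines these to a pairing of the original graph.\<close>
theorem tutte:
  assumes "finite W" "\<And>u v. adj u v \<Longrightarrow> adj v u" "tutte_condition W adj"
  shows "\<exists>m. perfect_pairing W adj m"
  using assms
proof (induction "nonedges W adj" arbitrary: adj rule: less_induct)
  case less
  note fin = less.prems(1) and sym = less.prems(2) and tc = less.prems(3)
  define U where "U = {u\<in>W. \<forall>w\<in>W. u \<noteq> w \<longrightarrow> adj u w}"
  show ?case
  proof (cases "\<forall>x\<in>W-U. \<forall>y\<in>W-U. \<forall>z\<in>W-U. adj x y \<longrightarrow> adj y z \<longrightarrow> x \<noteq> z \<longrightarrow> adj x z")
    case True
    then have "\<And>x y z. x \<in> W - U \<Longrightarrow> y \<in> W - U \<Longrightarrow> z \<in> W - U \<Longrightarrow> adj x y \<Longrightarrow> adj y z \<Longrightarrow> x \<noteq> z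
        \<Longrightarrow> adj x z" by blast
    moreover have "U \<subseteq> W" "\<And>u w. u \<in> U \<Longrightarrow> w \<in> W \<Longrightarrow> u \<noteq> w \<Longrightarrow> adj u w" unfolding U_def by auto
    ultimately show ?thesis using tutte_transitive_case[of W adj U, OF fin sym tc] by blast
  next
    case False
    then obtain a b c where abc: "a \<in> W" "b \<in> W - U" "c \<in> W" "adj a b" "adj b c" "a \<noteq> c" "\<not> adj a c"
      by blast
    then obtain d where d: "d \<in> W" "b \<noteq> d" "\<not> adj b d" unfolding U_def by auto
    have sym_with: "\<And>u v. with_edge adj x y u v \<Longrightarrow> with_edge adj x y v u" for x y
      using sym unfolding with_edge_def by blast
    have tc_with: "tutte_condition W (with_edge adj x y)" for x y
      by (rule tutte_condition_mono[OF tc]) (simp add: with_edge_def)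
    obtain m1 where m1: "perfect_pairing W (with_edge adj a c) m1"
      using less.hyps[OF nonedges_with_edge[OF fin] fin sym_with tc_with] abc by blast
    obtain m2 where m2: "perfect_pairing W (with_edge adj b d) m2"
      using less.hyps[OF nonedges_with_edge[OF fin] fin sym_with tc_with] abc d by blast
    show ?thesis
    proof (cases "perfect_pairing W adj m1 \<or> perfect_pairing W adj m2")
      case False
      then have "m1 a = c" "m2 b = d"
        using pairing_uses_edge[OF m1] pairing_uses_edge[OF m2] by auto
      moreover have "\<And>u v. with_edge adj a c u v \<Longrightarrow> u \<notin> {a, c} \<Longrightarrow> adj u v"
        and "\<And>u v. with_edge adj b d u v \<Longrightarrow> u \<notin> {b, d} \<Longrightarrow> adj u v"
        unfolding with_edge_def by auto
      moreover have "adj b a" "b \<notin> {a, c}" "d \<notin> {a, c}" using abc d sym by auto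
      ultimately show ?thesis
        using alternating_switch[of adj W "with_edge adj a c" m1 "with_edge adj b d" m2 a c b d,
            OF sym fin m1 m2] abc(1,2,5) by blast
    qed blast
  qed
qed

lemma cubicD:
  assumes "cubic V E ends"
  shows "finite V" "finite E" "\<And>g. g \<in> E \<Longrightarrow> card (ends g) = 2" "\<And>g. g \<in> E \<Longrightarrow> ends g \<subseteq> V"
    "\<And>v. v \<in> V \<Longrightarrow> degree E ends v = 3"
  using assms unfolding cubic_def multigraph_def by auto

lemma two_ends_eq:
  assumes "card S = 2" "p \<in> S" "q \<in> S" "p \<noteq> q"
  shows "S = {p, q}"
proof -
  have "finite S" using assms(1) card.infinite by fastforce
  then show ?thesis using assms by (intro card_subset_eq[symmetric]) auto
qed

lemma incidence_count:
  assumes "finite A" "finite F"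
  shows "(\<Sum>v\<in>A. card {g\<in>F. v \<in> ends g}) = (\<Sum>g\<in>F. card (ends g \<inter> A))"
proof -
  have "(\<Sum>v\<in>A. card {g\<in>F. v \<in> ends g}) = (\<Sum>v\<in>A. \<Sum>g\<in>{g. g \<in> F \<and> v \<in> ends g}. 1)" by simp
  also have "\<dots> = (\<Sum>g\<in>F. \<Sum>v\<in>{v. v \<in> A \<and> v \<in> ends g}. 1)" by (rule sum.swap_restrict[OF assms])
  also have "\<dots> = (\<Sum>g\<in>F. card (ends g \<inter> A))" by (simp add: Int_def conj_commute)
  finally show ?thesis .
qed

lemma regular_incidence_count:
  assumes "finite A" "finite F" "\<And>v. v \<in> A \<Longrightarrow> card {g\<in>F. v \<in> ends g} = r"
  shows "r * card A = (\<Sum>g\<in>F. card (ends g \<inter> A))"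
  using incidence_count[OF assms(1,2), of ends] assms(3) by (simp add: mult.commute)

definition inner_edges :: "'e set \<Rightarrow> ('e \<Rightarrow> 'v set) \<Rightarrow> 'v set \<Rightarrow> 'e set" where
  "inner_edges E ends A = {g\<in>E. ends g \<subseteq> A}"

lemma cubic_cut_count:
  assumes cub: "cubic V E ends" and AV: "A \<subseteq> V"
  shows "3 * card A = 2 * card (inner_edges E ends A) + card (edge_cut V E ends A)"
proof -
  note cub = cubicD[OF cub]
  have finA: "finite A" using cub(1) AV finite_subset by blast
  have ends_in_A: "card (ends g \<inter> A) = 2 * of_bool (g \<in> inner_edges E ends A) + of_bool (g \<in> edge_cut V E ends A)"
    if g: "g \<in> E" for g
  proof -
    obtain p q where "ends g = {p, q}" "p \<noteq> q" using cub(3)[OF g] by (meson card_2_iff)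
    moreover have "p \<in> V" "q \<in> V" using cub(4)[OF g] \<open>ends g = {p, q}\<close> by auto
    ultimately show ?thesis
      using g unfolding inner_edges_def edge_cut_def by (cases "p \<in> A"; cases "q \<in> A") auto
  qed
  have "3 * card A = (\<Sum>g\<in>E. card (ends g \<inter> A))"
    using regular_incidence_count[OF finA cub(2)] cub(5) AV unfolding degree_def by blast
  also have "\<dots> = (\<Sum>g\<in>E. 2 * of_bool (g \<in> inner_edges E ends A) + of_bool (g \<in> edge_cut V E ends A))"
    using ends_in_A by (rule sum.cong[OF refl])
  also have "\<dots> = 2 * card (inner_edges E ends A) + card (edge_cut V E ends A)"
  proof -
    have "E \<inter> {g. g \<in> inner_edges E ends A} = inner_edges E ends A"
      "E \<inter> {g. g \<in> edge_cut V E ends A} = edge_cut V E ends A"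
      unfolding inner_edges_def edge_cut_def by auto
    then show ?thesis using cub(2) by (simp add: sum.distrib sum_distrib_left[symmetric])
  qed
  finally show ?thesis .
qed

lemma cubic_even:
  assumes "cubic V E ends"
  shows "even (card V)"
proof -
  have "edge_cut V E ends V = {}" unfolding edge_cut_def by auto
  then have "3 * card V = 2 * card (inner_edges E ends V)"
    using cubic_cut_count[OF assms subset_refl] by simp
  then show ?thesis by presburger
qed

section \<open>Dense vertex sets contain cycles\<close>

text \<open>A path in A, listed from its head vs ! 0: distinct vertices vs joined by distinct edges es.\<close>
definition is_path :: "'e set \<Rightarrow> ('e \<Rightarrow> 'v set) \<Rightarrow> 'v set \<Rightarrow> 'v list \<Rightarrow> 'e list \<Rightarrow> bool" where
  "is_path E ends A vs es \<longleftrightarrow> length vs = Suc (length es) \<and> distinct vs \<and> distinct es \<and>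
     set vs \<subseteq> A \<and> set es \<subseteq> E \<and> (\<forall>i<length es. ends (es ! i) = {vs ! i, vs ! Suc i})"

lemma has_cycle_mono: "has_cycle_in E ends A \<Longrightarrow> A \<subseteq> B \<Longrightarrow> has_cycle_in E ends B"
  unfolding has_cycle_in_def by blast

lemma path_closing_cycle:
  assumes path: "is_path E ends A vs es" and g: "g \<in> E" "g \<notin> set (take j es)" "ends g = {vs ! 0, vs ! j}"
    and j: "0 < j" "j < length vs"
  shows "has_cycle_in E ends A"
  unfolding has_cycle_in_def
proof (intro exI conjI)
  let ?vs = "take (Suc j) vs" and ?es = "take j es @ [g]"
  have len: "length vs = Suc (length es)" and es: "\<forall>i<length es. ends (es ! i) = {vs ! i, vs ! Suc i}"
    using path unfolding is_path_def by auto
  show "length ?vs = length ?es" "2 \<le> length ?vs" using j len by auto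
  show "distinct ?vs" "distinct ?es" using path g(2) unfolding is_path_def by auto
  show "set ?vs \<subseteq> A" "set ?es \<subseteq> E"
    using path g(1) set_take_subset unfolding is_path_def by fastforce+
  show "\<forall>i<length ?vs. ends (?es ! i) = {?vs ! i, ?vs ! ((i + 1) mod length ?vs)}"
  proof (intro allI impI)
    fix i assume "i < length ?vs"
    then consider "i < j" | "i = j" using j by fastforce
    then show "ends (?es ! i) = {?vs ! i, ?vs ! ((i + 1) mod length ?vs)}"
    proof cases
      case 1
      then have "i < length es" using j len by simp
      moreover have "?es ! i = es ! i" using 1 \<open>i < length es\<close> by (simp add: nth_append)
      moreover have "(i + 1) mod length ?vs = Suc i" using 1 j by simp
      moreover have "?vs ! i = vs ! i" "?vs ! Suc i = vs ! Suc i" using 1 by simp_all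
      ultimately show ?thesis using es by simp
    next
      case 2
      have "j \<le> length es" using j len by simp
      then have "?es ! i = g" using 2 by (simp add: nth_append)
      moreover have "(i + 1) mod length ?vs = 0" using 2 j by simp
      moreover have "?vs ! i = vs ! j" "?vs ! 0 = vs ! 0" using 2 by simp_all
      ultimately show ?thesis using g(3) by (simp add: insert_commute)
    qed
  qed
qed

lemma path_grows_or_cycle:
  assumes path: "is_path E ends A vs es" and two: "\<And>g. g \<in> E \<Longrightarrow> card (ends g) = 2"
    and deg: "2 \<le> card {g\<in>E. vs ! 0 \<in> ends g \<and> ends g \<subseteq> A}"
  shows "(\<exists>vs' es'. is_path E ends A vs' es' \<and> length es' = Suc (length es)) \<or> has_cycle_in E ends A"
proof -
  let ?v = "vs ! 0"
  have len: "length vs = Suc (length es)" and dist: "distinct vs" "distinct es" and es: "set es \<subseteq> E"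
    and sub: "set vs \<subseteq> A" and ends_es: "\<forall>i<length es. ends (es ! i) = {vs ! i, vs ! Suc i}"
    using path unfolding is_path_def by auto
  have "\<not> {g\<in>E. ?v \<in> ends g \<and> ends g \<subseteq> A} \<subseteq> {es ! 0}"
    using card_mono[of "{es ! 0}" "{g\<in>E. ?v \<in> ends g \<and> ends g \<subseteq> A}"] deg by auto
  then obtain g where g: "g \<in> E" "?v \<in> ends g" "ends g \<subseteq> A" "g \<noteq> es ! 0" by blast
  obtain p q where "ends g = {p, q}" "p \<noteq> q" using two[OF g(1)] by (meson card_2_iff)
  then obtain w where w: "ends g = {?v, w}" "w \<noteq> ?v" using g(2) by (cases "p = ?v") (auto simp: insert_commute)
  show ?thesis
  proof (cases "w \<in> set vs")
    case False
    have "g \<notin> set es"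
    proof
      assume "g \<in> set es"
      then obtain i where "i < length es" "es ! i = g" by (auto simp: in_set_conv_nth)
      then have "w \<in> {vs ! i, vs ! Suc i}" using ends_es w by auto
      then show False using False len \<open>i < length es\<close> by (auto intro: nth_mem)
    qed
    moreover have "\<forall>i<length (g # es). ends ((g # es) ! i) = {(w # vs) ! i, (w # vs) ! Suc i}"
      using w ends_es by (auto simp: nth_Cons insert_commute split: nat.split)
    ultimately have "is_path E ends A (w # vs) (g # es)"
      using len dist es sub False g(1,3) w(1) unfolding is_path_def by auto
    then show ?thesis by (intro disjI1 exI[of _ "w # vs"] exI[of _ "g # es"]) simp
  next
    case True
    then obtain j where j: "j < length vs" "vs ! j = w" by (auto simp: in_set_conv_nth)
    then have "0 < j" using w by (cases j) auto
    have "g \<notin> set (take j es)"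
    proof
      assume "g \<in> set (take j es)"
      then obtain i where i: "i < j" "i < length es" "es ! i = g" by (auto simp: in_set_conv_nth)
      then have "?v \<in> {vs ! i, vs ! Suc i}" using ends_es g(2) by auto
      moreover have "?v \<noteq> vs ! Suc i" using nth_eq_iff_index_eq[OF dist(1), of 0 "Suc i"] i len by simp
      ultimately have "i = 0" using nth_eq_iff_index_eq[OF dist(1), of 0 i] i len by auto
      then show False using i g(4) by simp
    qed
    then show ?thesis using path_closing_cycle[OF path g(1) _ _ \<open>0 < j\<close> j(1)] w j by auto
  qed
qed

text \<open>If every vertex of a nonempty finite set has two edges inside it, the set contains a cycle:
  otherwise paths in it could be extended beyond |A| vertices.\<close>
lemma min_degree_cycle:
  assumes fin: "finite A" and ne: "A \<noteq> {}" and two: "\<And>g. g \<in> E \<Longrightarrow> card (ends g) = 2"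
    and deg: "\<And>v. v \<in> A \<Longrightarrow> 2 \<le> card {g\<in>E. v \<in> ends g \<and> ends g \<subseteq> A}"
  shows "has_cycle_in E ends A"
proof (rule ccontr)
  assume no_cycle: "\<not> has_cycle_in E ends A"
  have "\<exists>vs es. is_path E ends A vs es \<and> length es = n" for n
  proof (induction n)
    case 0
    obtain v where "v \<in> A" using ne by auto
    then have "is_path E ends A [v] []" unfolding is_path_def by auto
    then show ?case by blast
  next
    case (Suc n)
    then obtain vs es where path: "is_path E ends A vs es" "length es = n" by blast
    then have "vs ! 0 \<in> A" unfolding is_path_def by auto
    then show ?case using path_grows_or_cycle[OF path(1) two deg[OF \<open>vs ! 0 \<in> A\<close>]] no_cycle path(2)
      by auto
  qed
  then obtain vs es where "is_path E ends A vs es" "length es = card A" by blast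
  then have "card (set vs) = Suc (card A)" "set vs \<subseteq> A"
    unfolding is_path_def by (auto simp: distinct_card)
  then show False using card_mono[OF fin, of "set vs"] by simp
qed

lemma inner_edges_singleton:
  assumes "\<And>g. g \<in> E \<Longrightarrow> card (ends g) = 2"
  shows "inner_edges E ends {v} = {}"
proof (rule equals0I)
  fix g assume "g \<in> inner_edges E ends {v}"
  then have "g \<in> E" "ends g \<subseteq> {v}" unfolding inner_edges_def by auto
  then have "card (ends g) \<le> card {v}" "card (ends g) = 2"
    using card_mono[of "{v}" "ends g"] assms by simp_all
  then show False by simp
qed

text \<open>A nonempty vertex set spanning at least as many edges as it has vertices contains a cycle:
  delete vertices with at most one inner edge until the minimum degree is two.\<close>
lemma dense_cycle:
  assumes two: "\<And>g. g \<in> E \<Longrightarrow> card (ends g) = 2"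
  shows "finite A \<Longrightarrow> A \<noteq> {} \<Longrightarrow> card A \<le> card (inner_edges E ends A) \<Longrightarrow> has_cycle_in E ends A"
proof (induction "card A" arbitrary: A rule: less_induct)
  case less
  show ?case
  proof (cases "\<forall>v\<in>A. 2 \<le> card {g\<in>E. v \<in> ends g \<and> ends g \<subseteq> A}")
    case True
    then show ?thesis using min_degree_cycle[of A E ends] less.prems(1,2) two by blast
  next
    case False
    then obtain v where v: "v \<in> A" "card {g\<in>E. v \<in> ends g \<and> ends g \<subseteq> A} \<le> 1"
      by (auto simp: not_le)
    define D where "D = {g\<in>E. v \<in> ends g \<and> ends g \<subseteq> A}"
    define A' where "A' = A - {v}"
    have DA: "D \<subseteq> inner_edges E ends A" unfolding D_def inner_edges_def by auto
    have "0 < card A" using less.prems(1,2) by (simp add: card_gt_0_iff)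
    then have "finite (inner_edges E ends A)" using less.prems(3) by (intro card_ge_0_finite) linarith
    moreover have "inner_edges E ends A' = inner_edges E ends A - D"
      unfolding A'_def D_def inner_edges_def by auto
    ultimately have inner': "card (inner_edges E ends A') = card (inner_edges E ends A) - card D"
      using card_Diff_subset[OF _ DA] finite_subset[OF DA] by simp
    have cardA': "card A' = card A - 1" using v(1) less.prems(1) unfolding A'_def by simp
    have "A' \<noteq> {}"
    proof
      assume "A' = {}"
      then have "A = {v}" using v(1) unfolding A'_def by auto
      then show False using less.prems(3) inner_edges_singleton[of E ends v] two by simp
    qed
    moreover have "card A' < card A" "finite A'" using cardA' \<open>0 < card A\<close> less.prems(1) A'_def by auto
    moreover have "card A' \<le> card (inner_edges E ends A')"
      using inner' cardA' v(2) less.prems(3) unfolding D_def by linarith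
    ultimately have "has_cycle_in E ends A'" by (intro less.hyps)
    then show ?thesis by (rule has_cycle_mono) (auto simp: A'_def)
  qed
qed

lemma edge_cut_complement:
  assumes "B \<subseteq> V"
  shows "edge_cut V E ends (V - B) = edge_cut V E ends B"
  using assms unfolding edge_cut_def by (auto simp: Diff_Diff_Int Int_absorb2)

text \<open>In a cyclically 4-edge-connected cubic graph every cut with at least two vertices on each side
  has at least four edges: a smaller cut would leave both sides so dense that they contain cycles.\<close>
lemma cyclic_cut_bound:
  assumes cub: "cubic V E ends" and cyc: "cyclically_k_edge_connected 4 V E ends"
    and BV: "B \<subseteq> V" and B2: "2 \<le> card B" and VB2: "2 \<le> card (V - B)"
  shows "4 \<le> card (edge_cut V E ends B)"
proof (rule ccontr)
  assume "\<not> ?thesis"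
  then have small: "card (edge_cut V E ends B) \<le> 3" by simp
  have finB: "finite B" "finite (V - B)" using cubicD(1)[OF cub] BV finite_subset by auto
  have count_B: "3 * card B = 2 * card (inner_edges E ends B) + card (edge_cut V E ends B)"
    by (rule cubic_cut_count[OF cub BV])
  have count_VB: "3 * card (V - B) = 2 * card (inner_edges E ends (V - B)) + card (edge_cut V E ends B)"
    using cubic_cut_count[OF cub, of "V - B"] edge_cut_complement[OF BV, where E = E and ends = ends] by simp
  have "card B \<le> card (inner_edges E ends B)" "card (V - B) \<le> card (inner_edges E ends (V - B))"
    using count_B count_VB small B2 VB2 by presburger+
  moreover have "B \<noteq> {}" "V - B \<noteq> {}" using B2 VB2 by (metis card.empty not_numeral_le_zero)+
  ultimately have "has_cycle_in E ends B" "has_cycle_in E ends (V - B)"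
    using dense_cycle[of E ends] cubicD(3)[OF cub] finB by blast+
  with BV have "cyclic_edge_cut V E ends B" unfolding cyclic_edge_cut_def by blast
  then have "4 \<le> card (edge_cut V E ends B)" using cyc unfolding cyclically_k_edge_connected_def by blast
  with small show False by simp
qed

definition adjacent :: "'e set \<Rightarrow> ('e \<Rightarrow> 'v set) \<Rightarrow> 'v \<Rightarrow> 'v \<Rightarrow> bool" where
  "adjacent E ends u v \<longleftrightarrow> (\<exists>g\<in>E. ends g = {u, v})"

lemma adjacent_sym: "adjacent E ends u v \<Longrightarrow> adjacent E ends v u"
  unfolding adjacent_def by (auto simp: insert_commute)

lemma matching_from_pairing:
  assumes fE: "f \<in> E" and ef: "e \<noteq> f" and fxy: "ends f = {x, y}"
    and pm: "perfect_pairing (V - {x, y}) (adjacent (E - {e}) ends) m"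
  shows "\<exists>M. perfect_matching V E ends M \<and> e \<notin> M \<and> f \<in> M"
proof -
  let ?W = "V - {x, y}"
  define h where "h v = (SOME g. g \<in> E - {e} \<and> ends g = {v, m v})" for v
  have h: "h v \<in> E - {e}" "ends (h v) = {v, m v}" if "v \<in> ?W" for v
  proof -
    have "\<exists>g. g \<in> E - {e} \<and> ends g = {v, m v}"
      using perfect_pairingD(4)[OF pm that] unfolding adjacent_def by blast
    then show "h v \<in> E - {e}" "ends (h v) = {v, m v}" unfolding h_def by (metis (mono_tags, lifting) someI_ex)+
  qed
  note mW = perfect_pairingD(1-3)[OF pm]
  have h_partner: "h (m v) = h v" if "v \<in> ?W" for v
    using mW[OF that] unfolding h_def by (simp add: insert_commute)
  define M where "M = insert f (h ` ?W)"
  have "{g\<in>M. v \<in> ends g} = (if v \<in> {x, y} then {f} else {h v})" if "v \<in> V" for v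
  proof (cases "v \<in> {x, y}")
    case True
    have "v \<notin> ends (h w)" if "w \<in> ?W" for w using h[OF that] mW(1)[OF that] that True by auto
    then show ?thesis using True fxy unfolding M_def by auto
  next
    case False
    with \<open>v \<in> V\<close> have v: "v \<in> ?W" by simp
    have "g = h v" if "g \<in> M" "v \<in> ends g" for g
    proof (cases "g = f")
      case False
      then obtain w where w: "w \<in> ?W" "g = h w" using \<open>g \<in> M\<close> unfolding M_def by auto
      then have "v = w \<or> v = m w" using h(2)[OF w(1)] \<open>v \<in> ends g\<close> by auto
      then show ?thesis using w h_partner[OF w(1)] mW(3)[OF w(1)] by auto
    qed (use \<open>v \<in> ends g\<close> fxy \<open>v \<notin> {x, y}\<close> in auto)
    then show ?thesis using False v h(2)[OF v] unfolding M_def by auto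
  qed
  then have "perfect_matching V E ends M"
    using fE h(1) unfolding perfect_matching_def M_def by auto
  moreover have "e \<notin> M" "f \<in> M" unfolding M_def using ef h(1) by auto
  ultimately show ?thesis by blast
qed

lemma crossing_count:
  assumes "finite F" "H \<subseteq> F" "\<And>g. g \<in> F - H \<Longrightarrow> card (ends g \<inter> X) = 1"
  shows "(\<Sum>g\<in>F. card (ends g \<inter> X)) = card (F - H) + (\<Sum>g\<in>H. card (ends g \<inter> X))"
  using sum.subset_diff[OF assms(2,1), of "\<lambda>g. card (ends g \<inter> X)"] assms(3) by simp

text \<open>If G - e - f is bipartite with e inside X and f inside V - X, then degree counting gives
  |X| = |V - X|, while a perfect matching containing f and avoiding e would cover V - X by f and by
  one end of each other matching edge, giving |V - X| = |X| + 2.\<close>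
lemma no_matching_if_bipartite:
  assumes cub: "cubic V E ends" and eE: "e \<in> E" and fE: "f \<in> E" and ef: "e \<noteq> f"
    and bip: "bipartition V (E - {e, f}) ends X" and eX: "ends e \<subseteq> X" and fX: "ends f \<subseteq> V - X"
  shows "\<not> (\<exists>M. perfect_matching V E ends M \<and> e \<notin> M \<and> f \<in> M)"
proof
  assume "\<exists>M. perfect_matching V E ends M \<and> e \<notin> M \<and> f \<in> M"
  then obtain M where M: "M \<subseteq> E" "\<And>v. v \<in> V \<Longrightarrow> card {g\<in>M. v \<in> ends g} = 1" "e \<notin> M" "f \<in> M"
    unfolding perfect_matching_def by blast
  note cub = cubicD[OF cub]
  let ?Y = "V - X"
  have XV: "X \<subseteq> V" and cross: "\<And>g. g \<in> E - {e, f} \<Longrightarrow> card (ends g \<inter> X) = 1 \<and> card (ends g \<inter> ?Y) = 1"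
    using bip unfolding bipartition_def by auto
  have "ends e \<inter> ?Y = {}" "ends f \<inter> X = {}" using eX fX by auto
  then have e_ends: "card (ends e \<inter> X) = 2" "card (ends e \<inter> ?Y) = 0"
    and f_ends: "card (ends f \<inter> X) = 0" "card (ends f \<inter> ?Y) = 2"
    using eX fX cub(3)[OF eE] cub(3)[OF fE] by (simp_all add: Int_absorb2)
  have degrees: "3 * card A = (\<Sum>g\<in>E. card (ends g \<inter> A))" if "A \<subseteq> V" for A
    using regular_incidence_count[OF finite_subset[OF that cub(1)] cub(2)] cub(5) that
    unfolding degree_def by blast
  have "{e, f} \<subseteq> E" using eE fE by simp
  then have "3 * card X = card (E - {e, f}) + 2" "3 * card ?Y = card (E - {e, f}) + 2"
    using degrees[OF XV] degrees[of ?Y] e_ends f_ends ef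
      crossing_count[of E "{e, f}" ends X, OF cub(2)] crossing_count[of E "{e, f}" ends ?Y, OF cub(2)] cross
    by auto
  then have same_size: "card X = card ?Y" by simp
  have finM: "finite M" using M(1) cub(2) finite_subset by blast
  have covered: "card A = (\<Sum>g\<in>M. card (ends g \<inter> A))" if "A \<subseteq> V" for A
    using regular_incidence_count[OF finite_subset[OF that cub(1)] finM, of ends 1] M(2) that by auto
  have "{f} \<subseteq> M" "M - {f} \<subseteq> E - {e, f}" using M(1,3,4) by auto
  then have "card X = card (M - {f})" "card ?Y = card (M - {f}) + 2"
    using covered[OF XV] covered[of ?Y] f_ends cross
      crossing_count[of M "{f}" ends X, OF finM] crossing_count[of M "{f}" ends ?Y, OF finM]
    by auto
  with same_size show False by simp
qed

section \<open>Without the matching, G - e - f is bipartite\<close>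

text \<open>If no perfect matching contains f = xy and avoids e, then G - e - x - y has no perfect pairing,
  so Tutte's theorem yields a barrier S; with T = S + {x, y} and parity, V - T splits into separated
  blocks of which at least |T| are odd.\<close>
lemma no_matching_barrier:
  assumes cub: "cubic V E ends" and fE: "f \<in> E" and ef: "e \<noteq> f"
    and no_matching: "\<not> (\<exists>M. perfect_matching V E ends M \<and> e \<notin> M \<and> f \<in> M)"
  obtains T P where "ends f \<subseteq> T" "T \<subseteq> V" "partition_on (V - T) P"
    "separated (adjacent (E - {e}) ends) P" "card T \<le> card {B\<in>P. odd (card B)}"
proof -
  note cub' = cubicD[OF cub]
  obtain x y where f: "ends f = {x, y}" "x \<noteq> y" using cub'(3)[OF fE] by (meson card_2_iff)
  let ?W = "V - {x, y}" and ?adj = "adjacent (E - {e}) ends"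
  have "\<not> tutte_condition ?W ?adj"
  proof
    assume "tutte_condition ?W ?adj"
    moreover have "finite ?W" using cub'(1) by simp
    ultimately obtain m where "perfect_pairing ?W ?adj m"
      using tutte[of ?W ?adj, OF _ adjacent_sym] by blast
    then show False using matching_from_pairing[of f E e ends x y V m] fE ef f(1) no_matching by blast
  qed
  then obtain S P where S: "S \<subseteq> ?W" and P: "partition_on (?W - S) P" "separated ?adj P"
    and many: "card S < card {B\<in>P. odd (card B)}"
    unfolding tutte_condition_def by (auto simp: not_le)
  define T where "T = S \<union> {x, y}"
  have VT: "V - T = ?W - S" unfolding T_def by auto
  have TV: "T \<subseteq> V" using S cub'(4)[OF fE] f(1) unfolding T_def by auto
  have finT: "finite T" using TV cub'(1) finite_subset by blast
  have "finite S" using S cub'(1) finite_subset by blast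
  then have "card T = card S + card {x, y}" unfolding T_def using S by (intro card_Un_disjoint) auto
  then have cardT: "card T = card S + 2" using f(2) by simp
  have "even (card (V - T)) \<longleftrightarrow> even (card {B\<in>P. odd (card B)})"
    using partition_parity[OF _ P(1)] cub'(1) VT by simp
  moreover have "card (V - T) = card V - card T" "card T \<le> card V"
    using card_Diff_subset[OF finT TV] card_mono[OF cub'(1) TV] by auto
  ultimately have "card T \<le> card {B\<in>P. odd (card B)}"
    using cubic_even[OF cub] cardT many by presburger
  then show ?thesis using that[of T P] f(1) TV P VT unfolding T_def by auto
qed

text \<open>Lower bound for the cut of a block: three edges leave a single vertex, and by cyclic
  4-edge-connectivity at least four leave any larger block whose complement has two vertices.\<close>
lemma block_cut_lower:
  assumes cub: "cubic V E ends" and cyc: "cyclically_k_edge_connected 4 V E ends"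
    and BV: "B \<subseteq> V" and "B \<noteq> {}" and two_outside: "2 \<le> card (V - B)"
  shows "3 + of_bool (card B \<noteq> 1) \<le> card (edge_cut V E ends B)"
proof (cases "card B = 1")
  case True
  then obtain v where "B = {v}" by (auto simp: card_Suc_eq)
  then show ?thesis
    using cubic_cut_count[OF cub BV] inner_edges_singleton[of E ends v] cubicD(3)[OF cub] by simp
next
  case False
  have "finite B" using BV cubicD(1)[OF cub] finite_subset by blast
  then have "card B \<noteq> 0" using \<open>B \<noteq> {}\<close> by simp
  with False have "2 \<le> card B" by linarith
  then show ?thesis using cyclic_cut_bound[OF cub cyc BV _ two_outside] False by simp
qed

lemma blocks_meeting:
  assumes "disjoint P" "finite Z"
  shows "card {B\<in>P. Z \<inter> B \<noteq> {}} \<le> card (Z \<inter> \<Union>P)"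
proof -
  define r where "r B = (SOME z. z \<in> Z \<inter> B)" for B
  have r: "r B \<in> Z \<inter> B" if "B \<in> P" "Z \<inter> B \<noteq> {}" for B
    using that unfolding r_def by (metis ex_in_conv someI_ex)
  have "inj_on r {B\<in>P. Z \<inter> B \<noteq> {}}"
  proof (rule inj_onI)
    fix B B' assume B: "B \<in> {B\<in>P. Z \<inter> B \<noteq> {}}" "B' \<in> {B\<in>P. Z \<inter> B \<noteq> {}}" "r B = r B'"
    then have "r B \<in> B \<inter> B'" using r by fastforce
    then show "B = B'" using assms(1) B unfolding pairwise_def disjnt_def by blast
  qed
  moreover have "r ` {B\<in>P. Z \<inter> B \<noteq> {}} \<subseteq> Z \<inter> \<Union>P" using r by blast
  ultimately show ?thesis using assms(2) by (intro card_inj_on_le) auto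
qed

lemma block_cut_reaches_barrier:
  assumes two: "\<And>g. g \<in> E \<Longrightarrow> card (ends g) = 2"
    and P: "partition_on (V - T) P" and sep: "separated (adjacent (E - {e}) ends) P" and B: "B \<in> P"
  shows "edge_cut V E ends B - {e} \<subseteq> edge_cut V E ends T"
proof
  fix g assume g: "g \<in> edge_cut V E ends B - {e}"
  then obtain p q where pq: "p \<in> ends g" "p \<in> B" "q \<in> ends g" "q \<in> V" "q \<notin> B" "g \<in> E"
    unfolding edge_cut_def by auto
  have "p \<noteq> q" using pq(2,5) by blast
  then have "ends g = {p, q}" by (rule two_ends_eq[OF two[OF pq(6)] pq(1,3)])
  then have adj: "adjacent (E - {e}) ends p q" using g pq(6) unfolding adjacent_def by blast
  have "q \<in> T"
  proof (rule ccontr)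
    assume "q \<notin> T"
    then obtain B' where "B' \<in> P" "q \<in> B'" using pq(4) partition_onD1[OF P] by blast
    moreover have "B' \<noteq> B" using \<open>q \<in> B'\<close> pq(5) by blast
    ultimately show False using sep B pq(2) adj unfolding separated_def by blast
  qed
  moreover have "p \<in> V - T" using pq(2) B partition_onD1[OF P] by blast
  ultimately show "g \<in> edge_cut V E ends T" using pq unfolding edge_cut_def by blast
qed

lemma block_cuts_disjoint:
  assumes two: "\<And>g. g \<in> E \<Longrightarrow> card (ends g) = 2"
    and P: "partition_on (V - T) P" and B: "B \<in> P" "B' \<in> P" "B \<noteq> B'"
  shows "(edge_cut V E ends B \<inter> edge_cut V E ends T) \<inter> (edge_cut V E ends B' \<inter> edge_cut V E ends T) = {}"
proof (rule equals0I)
  fix g assume "g \<in> (edge_cut V E ends B \<inter> edge_cut V E ends T) \<inter> (edge_cut V E ends B' \<inter> edge_cut V E ends T)"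
  then obtain p p' t where pt: "p \<in> ends g \<inter> B" "p' \<in> ends g \<inter> B'" "t \<in> ends g \<inter> T" and "g \<in> E"
    unfolding edge_cut_def by blast
  have "B \<inter> B' = {}" using partition_onD2[OF P] B unfolding pairwise_def disjnt_def by blast
  moreover have "B \<subseteq> V - T" "B' \<subseteq> V - T" using partition_onD1[OF P] B by blast+
  ultimately have "p \<noteq> p'" "p \<noteq> t" "p' \<noteq> t" using pt by blast+
  then have "card {p, p', t} = 3" by simp
  moreover have "card {p, p', t} \<le> card (ends g)"
    using pt two[OF \<open>g \<in> E\<close>] card.infinite by (intro card_mono) fastforce+
  ultimately show False using two[OF \<open>g \<in> E\<close>] by simp
qed

lemma blocks_cut_upper:
  assumes finV: "finite V" and finE: "finite E"
    and two: "\<And>g. g \<in> E \<Longrightarrow> card (ends g) = 2"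
    and P: "partition_on (V - T) P" and sep: "separated (adjacent (E - {e}) ends) P"
  shows "(\<Sum>B\<in>P. card (edge_cut V E ends B)) \<le> card (edge_cut V E ends T) + card (ends e \<inter> (V - T))"
proof -
  let ?cut = "edge_cut V E ends"
  have finP: "finite P" using finite_elements[OF _ P] finV by simp
  have fin_cut: "finite (?cut A)" for A using finE unfolding edge_cut_def by simp
  have per_block: "card (?cut B) \<le> card (?cut B \<inter> ?cut T) + of_bool (e \<in> ?cut B)" if "B \<in> P" for B
  proof -
    have "card (?cut B) \<le> card ((?cut B \<inter> ?cut T) \<union> (?cut B \<inter> {e}))"
      using block_cut_reaches_barrier[OF two P sep that] fin_cut by (intro card_mono) auto
    also have "\<dots> \<le> card (?cut B \<inter> ?cut T) + card (?cut B \<inter> {e})" by (rule card_Un_le)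
    finally show ?thesis by (auto split: if_splits)
  qed
  have "(\<Sum>B\<in>P. card (?cut B \<inter> ?cut T)) = card (\<Union>B\<in>P. ?cut B \<inter> ?cut T)"
    using finP fin_cut block_cuts_disjoint[of E ends V T P, OF two P] by (intro card_UN_disjoint[symmetric]) auto
  also have "\<dots> \<le> card (?cut T)" using fin_cut by (intro card_mono) auto
  finally have to_T: "(\<Sum>B\<in>P. card (?cut B \<inter> ?cut T)) \<le> card (?cut T)" .
  have "(\<Sum>B\<in>P. of_bool (e \<in> ?cut B) :: nat) = card {B\<in>P. e \<in> ?cut B}"
    using finP by (simp add: Int_def)
  also have "\<dots> \<le> card {B\<in>P. (ends e \<inter> (V - T)) \<inter> B \<noteq> {}}"
    using finP partition_onD1[OF P] unfolding edge_cut_def by (intro card_mono) auto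
  also have "\<dots> \<le> card (ends e \<inter> (V - T) \<inter> \<Union>P)"
    by (rule blocks_meeting[OF partition_onD2[OF P]]) (use finV in simp)
  also have "ends e \<inter> (V - T) \<inter> \<Union>P = ends e \<inter> (V - T)" using partition_onD1[OF P] by blast
  finally have e_count: "(\<Sum>B\<in>P. of_bool (e \<in> ?cut B) :: nat) \<le> card (ends e \<inter> (V - T))" .
  have "(\<Sum>B\<in>P. card (?cut B)) \<le> (\<Sum>B\<in>P. card (?cut B \<inter> ?cut T) + of_bool (e \<in> ?cut B))"
    using per_block by (rule sum_mono)
  then show ?thesis using to_T e_count by (simp add: sum.distrib)
qed

text \<open>Comparing the two bounds with 3 |T| = 2 |E(T)| + |cut(T)|, |E(T)| \<ge> 1 (it contains f) and at
  least |T| blocks: all inequalities are tight, so the blocks are single vertices, f is the only edge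
  inside T, and both ends of e lie outside T.\<close>
lemma tight_barrier:
  assumes cub: "cubic V E ends" and cyc: "cyclically_k_edge_connected 4 V E ends"
    and eE: "e \<in> E" and fE: "f \<in> E" and fT: "ends f \<subseteq> T" and TV: "T \<subseteq> V"
    and P: "partition_on (V - T) P" and sep: "separated (adjacent (E - {e}) ends) P"
    and many: "card T \<le> card {B\<in>P. odd (card B)}"
  shows "\<forall>B\<in>P. card B = 1" "inner_edges E ends T = {f}" "ends e \<inter> (V - T) = ends e"
proof -
  note cub' = cubicD[OF cub]
  let ?cut = "edge_cut V E ends" and ?k = "card (ends e \<inter> (V - T))"
  define big where "big = {B\<in>P. card B \<noteq> 1}"
  have finP: "finite P" using finite_elements[OF _ P] cub'(1) by simp
  have PT: "B \<subseteq> V - T" "B \<noteq> {}" if "B \<in> P" for B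
    using P that unfolding partition_on_def by blast+
  have "2 \<le> card (V - B)" if "B \<in> P" for B
  proof -
    have "ends f \<subseteq> V - B" using cub'(4)[OF fE] fT PT(1)[OF that] by blast
    then have "card (ends f) \<le> card (V - B)" using cub'(1) by (intro card_mono) auto
    then show ?thesis using cub'(3)[OF fE] by simp
  qed
  then have "(\<Sum>B\<in>P. 3 + of_bool (card B \<noteq> 1)) \<le> (\<Sum>B\<in>P. card (?cut B))"
    using block_cut_lower[OF cub cyc] PT by (intro sum_mono) blast
  then have lower: "3 * card P + card big \<le> (\<Sum>B\<in>P. card (?cut B))"
    using finP unfolding big_def by (simp add: sum.distrib Int_def)
  have upper: "(\<Sum>B\<in>P. card (?cut B)) \<le> card (?cut T) + ?k"
    by (rule blocks_cut_upper[OF cub'(1,2,3) P sep])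
  have count_T: "3 * card T = 2 * card (inner_edges E ends T) + card (?cut T)"
    by (rule cubic_cut_count[OF cub TV])
  have fin_inner: "finite (inner_edges E ends T)" using cub'(2) unfolding inner_edges_def by simp
  have f_inner: "f \<in> inner_edges E ends T" using fE fT unfolding inner_edges_def by simp
  then have inner_pos: "1 \<le> card (inner_edges E ends T)" using fin_inner card_0_eq by fastforce
  have fin_e: "finite (ends e)" using cub'(3)[OF eE] card.infinite by fastforce
  then have "?k \<le> card (ends e)" by (intro card_mono) auto
  then have k_le: "?k \<le> 2" using cub'(3)[OF eE] by simp
  have odd_le: "card {B\<in>P. odd (card B)} \<le> card P" using finP by (intro card_mono) auto
  have "card big = 0" "card (inner_edges E ends T) = 1" "?k = 2"
    using lower upper count_T many inner_pos k_le odd_le by linarith+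
  show "\<forall>B\<in>P. card B = 1" using \<open>card big = 0\<close> finP unfolding big_def by simp
  show "inner_edges E ends T = {f}"
    using \<open>card (inner_edges E ends T) = 1\<close> f_inner by (auto simp: card_1_singleton_iff)
  show "ends e \<inter> (V - T) = ends e"
    using \<open>?k = 2\<close> cub'(3)[OF eE] fin_e by (intro card_subset_eq) auto
qed

text \<open>A tight barrier exhibits the bipartition: every edge other than e and f has one end in the
  singleton blocks V - T (two such ends would be adjacent in G - e, joining two blocks) and one end
  in T (f is the only edge inside T).\<close>
lemma bipartition_from_tight_barrier:
  assumes two: "\<And>g. g \<in> E \<Longrightarrow> card (ends g) = 2" and sub: "\<And>g. g \<in> E \<Longrightarrow> ends g \<subseteq> V"
    and P: "partition_on (V - T) P" and sep: "separated (adjacent (E - {e}) ends) P"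
    and singletons: "\<forall>B\<in>P. card B = 1" and inner: "inner_edges E ends T = {f}"
  shows "bipartition V (E - {e, f}) ends (V - T)"
  unfolding bipartition_def
proof (rule conjI[OF Diff_subset ballI])
  fix g assume g: "g \<in> E - {e, f}"
  obtain p q where pq: "ends g = {p, q}" "p \<noteq> q" using two g by (meson DiffD1 card_2_iff)
  have V: "p \<in> V" "q \<in> V" using sub g pq(1) by auto
  have "g \<notin> inner_edges E ends T" using inner g by blast
  then have "\<not> (p \<in> T \<and> q \<in> T)" using g pq(1) unfolding inner_edges_def by auto
  moreover have "\<not> (p \<in> V - T \<and> q \<in> V - T)"
  proof
    assume "p \<in> V - T \<and> q \<in> V - T"
    then obtain B B' where B: "B \<in> P" "p \<in> B" "B' \<in> P" "q \<in> B'" using partition_onD1[OF P] by blast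
    have "adjacent (E - {e}) ends p q" using g pq(1) unfolding adjacent_def by blast
    then have "B = B'" using sep B unfolding separated_def by blast
    then have "{p, q} \<subseteq> B" using B by blast
    moreover have "finite B" using singletons B(1) card.infinite by fastforce
    ultimately have "card {p, q} \<le> card B" by (intro card_mono)
    then show False using singletons B(1) pq(2) by simp
  qed
  ultimately consider "p \<in> V - T" "q \<in> T" | "q \<in> V - T" "p \<in> T" using V by blast
  then show "card (ends g \<inter> (V - T)) = 1 \<and> card (ends g \<inter> (V - (V - T))) = 1"
  proof cases
    case 1
    then have "ends g \<inter> (V - T) = {p}" "ends g \<inter> (V - (V - T)) = {q}" using pq V by auto
    then show ?thesis by simp
  next
    case 2
    then have "ends g \<inter> (V - T) = {q}" "ends g \<inter> (V - (V - T)) = {p}" using pq V by auto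
    then show ?thesis by simp
  qed
qed

theorem mainTheorem4:
  fixes V :: "'v set" and E :: "'e set" and ends :: "'e \<Rightarrow> 'v set" and e f :: 'e
  assumes "cubic V E ends"
    and "cyclically_k_edge_connected 4 V E ends"
    and "e \<in> E" and "f \<in> E" and "e \<noteq> f"
  shows "(\<not> (\<exists>M. perfect_matching V E ends M \<and> e \<notin> M \<and> f \<in> M)) \<longleftrightarrow>
         (\<exists>X. bipartition V (E - {e, f}) ends X \<and> ends e \<subseteq> X \<and> ends f \<subseteq> V - X)"
proof
  assume "\<not> (\<exists>M. perfect_matching V E ends M \<and> e \<notin> M \<and> f \<in> M)"
  then obtain T P where fT: "ends f \<subseteq> T" and TV: "T \<subseteq> V" and P: "partition_on (V - T) P"
    and sep: "separated (adjacent (E - {e}) ends) P" and many: "card T \<le> card {B\<in>P. odd (card B)}"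
    using no_matching_barrier[OF assms(1,4,5)] by blast
  note tight = tight_barrier[OF assms(1-4) fT TV P sep many]
  have "bipartition V (E - {e, f}) ends (V - T)"
    using bipartition_from_tight_barrier[of E ends V T P e f] cubicD(3,4)[OF assms(1)] P sep tight(1,2)
    by blast
  moreover have "ends e \<subseteq> V - T" "ends f \<subseteq> V - (V - T)"
    using tight(3) fT TV by auto
  ultimately show "\<exists>X. bipartition V (E - {e, f}) ends X \<and> ends e \<subseteq> X \<and> ends f \<subseteq> V - X" by blast
next
  assume "\<exists>X. bipartition V (E - {e, f}) ends X \<and> ends e \<subseteq> X \<and> ends f \<subseteq> V - X"
  then obtain X where "bipartition V (E - {e, f}) ends X" "ends e \<subseteq> X" "ends f \<subseteq> V - X" by blast
  then show "\<not> (\<exists>M. perfect_matching V E ends M \<and> e \<notin> M \<and> f \<in> M)"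
    by (rule no_matching_if_bipartite[OF assms(1,3-5)])
qed

end
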